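(* Let $S\in\{0,1\}^{n\times n}$ be a symmetric binary matrix. Then the problem $$\min_{R\in\mathcal{R}^n} \; \sum_{i,j=1}^n |R_{ij}-S_{ij}|$$ admits an optimal solution $R\in\{0,1\}^{n\times n}$.
   Context: A real matrix $R\in\mathbb{R}^{n\times n}$ is a strong-R-matrix (strong Robinson matrix) if it is symmetric and satisfies $R_{ij}\le R_{kl}$ for all $(i,j,k,l)$ with $|i-j|\ge|k-l|$. $\mathcal{R}^n$ denotes the set of $n\times n$ strong-R-matrices. *)

theory Defs
  imports Complex_Main
begin

text \<open>n x n real matrices are represented as functions nat => nat => real,
  with indices ranging over {0..<n}; entries outside are irrelevant.\<close>

definition strong_R_matrix :: "nat \<Rightarrow> (nat \<Rightarrow> nat \<Rightarrow> real) \<Rightarrow> bool" where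
  "strong_R_matrix n R \<longleftrightarrow>
     (\<forall>i<n. \<forall>j<n. R i j = R j i) \<and>
     (\<forall>i<n. \<forall>j<n. \<forall>k<n. \<forall>l<n.
        nat \<bar>int i - int j\<bar> \<ge> nat \<bar>int k - int l\<bar> \<longrightarrow> R i j \<le> R k l)"

definition l1_dist :: "nat \<Rightarrow> (nat \<Rightarrow> nat \<Rightarrow> real) \<Rightarrow> (nat \<Rightarrow> nat \<Rightarrow> real) \<Rightarrow> real" where
  "l1_dist n R S = (\<Sum>i<n. \<Sum>j<n. \<bar>R i j - S i j\<bar>)"

end

theory Submission
  imports Defs
begin

text \<open>
  Clipping a strong-R-matrix \<open>R\<close> entrywise to \<open>[0,1]\<close> does not increase its
  distance to a binary \<open>S\<close>. The clipped matrix is a convex combination of the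
  binary band matrices \<open>band m\<close> (entries \<open>1\<close> exactly at distance \<open>< m\<close> from the
  diagonal), \<open>m = 0..n\<close>, with weights the successive drops of the clipped entries
  along the first column. Against a binary target, the \<open>\<ell>\<^sub>1\<close>-distance is affine
  along such a combination of binary matrices, so some band matrix is at least as
  close to \<open>S\<close> as \<open>R\<close>; the best of the \<open>n + 1\<close> band matrices is therefore optimal.
\<close>

definition clip01 :: "real \<Rightarrow> real" where
  "clip01 x = min 1 (max 0 x)"

definition band :: "nat \<Rightarrow> nat \<Rightarrow> nat \<Rightarrow> real" where
  "band m i j = (if nat \<bar>int i - int j\<bar> < m then 1 else 0)"

lemma band_binary: "band m i j \<in> {0, 1}"
  unfolding band_def by simp

lemma strong_R_matrix_band: "strong_R_matrix n (band m)"
  unfolding strong_R_matrix_def band_def by auto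

lemma strong_R_matrix_eq_first_column:
  assumes "strong_R_matrix n R" "i < n" "j < n"
  shows "R i j = R (nat \<bar>int i - int j\<bar>) 0"
proof -
  let ?d = "nat \<bar>int i - int j\<bar>"
  have "?d < n" "0 < n" using assms(2,3) by auto
  then have "R i j \<le> R ?d 0" "R ?d 0 \<le> R i j"
    using assms unfolding strong_R_matrix_def by auto
  then show ?thesis by simp
qed

lemma strong_R_matrix_first_column_antimono:
  assumes "strong_R_matrix n R" "Suc d < n"
  shows "R (Suc d) 0 \<le> R d 0"
  using assms unfolding strong_R_matrix_def by auto

lemma abs_clip01_diff_le:
  assumes "s \<in> {0..1}"
  shows "\<bar>clip01 x - s\<bar> \<le> \<bar>x - s\<bar>"
  using assms unfolding clip01_def by auto

lemma sum_abs_diff_binary_convex_comb: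
  fixes lam b :: "'a \<Rightarrow> real"
  assumes "\<And>m. m \<in> M \<Longrightarrow> lam m \<ge> 0" "(\<Sum>m\<in>M. lam m) = 1"
    and "\<And>m. m \<in> M \<Longrightarrow> b m \<in> {0, 1}" "s \<in> {0, 1}"
  shows "(\<Sum>m\<in>M. lam m * \<bar>b m - s\<bar>) = \<bar>(\<Sum>m\<in>M. lam m * b m) - s\<bar>"
proof (cases "s = 0")
  case True
  have "(\<Sum>m\<in>M. lam m * \<bar>b m - s\<bar>) = (\<Sum>m\<in>M. lam m * b m)"
    using assms(3) True by (intro sum.cong) force+
  moreover have "(\<Sum>m\<in>M. lam m * b m) \<ge> 0"
    using assms(1,3) by (intro sum_nonneg mult_nonneg_nonneg) force+
  ultimately show ?thesis using True by simp
next
  case False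
  then have "s = 1" using assms(4) by simp
  have "(\<Sum>m\<in>M. lam m * \<bar>b m - s\<bar>) = (\<Sum>m\<in>M. lam m - lam m * b m)"
    using assms(3) \<open>s = 1\<close> by (intro sum.cong) force+
  also have "\<dots> = 1 - (\<Sum>m\<in>M. lam m * b m)"
    using assms(2) by (simp add: sum_subtractf)
  moreover have "(\<Sum>m\<in>M. lam m * b m) \<le> (\<Sum>m\<in>M. lam m)"
    using assms(1,3) by (intro sum_mono) fastforce
  ultimately show ?thesis using assms(2) \<open>s = 1\<close> by simp
qed

lemma convex_comb_le_imp_exists_le:
  fixes lam c :: "'a \<Rightarrow> real"
  assumes "finite M" "\<And>m. m \<in> M \<Longrightarrow> lam m \<ge> 0" "(\<Sum>m\<in>M. lam m) = 1"
    and "(\<Sum>m\<in>M. lam m * c m) \<le> x"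
  shows "\<exists>m\<in>M. c m \<le> x"
proof (rule ccontr)
  assume below: "\<not> (\<exists>m\<in>M. c m \<le> x)"
  obtain m where "m \<in> M" "lam m > 0"
    using assms(2,3) by (metis less_eq_real_def sum.neutral zero_neq_one)
  then have "lam m * x < lam m * c m"
    using below by (simp add: not_le)
  moreover have "lam k * x \<le> lam k * c k" if "k \<in> M" for k
    using that below assms(2) by (meson less_imp_le mult_left_mono not_le)
  ultimately have "(\<Sum>k\<in>M. lam k * x) < (\<Sum>k\<in>M. lam k * c k)"
    using \<open>m \<in> M\<close> assms(1) by (intro sum_strict_mono_ex1) auto
  then show False using assms(3,4) by (simp add: sum_distrib_right[symmetric])
qed

lemma strong_R_matrix_clip01_band_decomposition:
  assumes "strong_R_matrix n R"
  obtains lam where "\<And>m. lam m \<ge> 0" "(\<Sum>m=0..n. lam m) = 1"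
    "\<And>i j. i < n \<Longrightarrow> j < n \<Longrightarrow> (\<Sum>m=0..n. lam m * band m i j) = clip01 (R i j)"
proof
  \<comment> \<open>\<open>G (Suc d)\<close> is the clipped entry at distance \<open>d\<close>, padded by \<open>1\<close> below and \<open>0\<close> above.\<close>
  define G where
    "G k = (if k = 0 then 1 else if k - 1 < n then clip01 (R (k - 1) 0) else 0)" for k
  define lam where "lam m = G m - G (Suc m)" for m
  have tail_sum: "(\<Sum>m=k..n. lam m) = G k - G (Suc n)" if "k \<le> Suc n" for k
    using sum_Suc_diff[OF that, of "\<lambda>m. - G m"] by (simp add: lam_def)
  have G_antimono: "G (Suc m) \<le> G m" for m
  proof (cases m)
    case 0
    then show ?thesis by (simp add: G_def clip01_def)
  next
    case (Suc d)
    then show ?thesis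
      using strong_R_matrix_first_column_antimono[OF assms, of d]
      by (auto simp: G_def clip01_def)
  qed
  show "lam m \<ge> 0" for m
    using G_antimono[of m] by (simp add: lam_def)
  show "(\<Sum>m=0..n. lam m) = 1"
    by (simp add: tail_sum G_def)
  fix i j assume ij: "i < n" "j < n"
  let ?d = "nat \<bar>int i - int j\<bar>"
  have "?d < n"
    using ij by auto
  have "(\<Sum>m=0..n. lam m * band m i j) = (\<Sum>m\<in>{0..n} \<inter> {m. ?d < m}. lam m)"
    unfolding sum.inter_restrict[OF finite_atLeastAtMost] by (intro sum.cong) (simp_all add: band_def)
  also have "{0..n} \<inter> {m. ?d < m} = {Suc ?d..n}"
    by auto
  also have "(\<Sum>m=Suc ?d..n. lam m) = clip01 (R ?d 0)"
    using \<open>?d < n\<close> by (simp add: tail_sum G_def)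
  finally show "(\<Sum>m=0..n. lam m * band m i j) = clip01 (R i j)"
    using strong_R_matrix_eq_first_column[OF assms ij] by simp
qed

lemma strong_R_matrix_exists_band_le_l1_dist:
  assumes "strong_R_matrix n R" "\<forall>i<n. \<forall>j<n. S i j \<in> {0, 1}"
  shows "\<exists>m\<in>{0..n}. l1_dist n (band m) S \<le> l1_dist n R S"
proof -
  obtain lam where lam_nonneg: "\<And>m. lam m \<ge> 0" and lam_sum: "(\<Sum>m=0..n. lam m) = 1"
    and decomp: "\<And>i j. i < n \<Longrightarrow> j < n \<Longrightarrow> (\<Sum>m=0..n. lam m * band m i j) = clip01 (R i j)"
    using strong_R_matrix_clip01_band_decomposition[OF assms(1)] by blast
  have entry: "(\<Sum>m=0..n. lam m * \<bar>band m i j - S i j\<bar>) \<le> \<bar>R i j - S i j\<bar>"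
    if "i < n" "j < n" for i j
  proof -
    have "S i j \<in> {0, 1}" using assms(2) that by blast
    then have "(\<Sum>m=0..n. lam m * \<bar>band m i j - S i j\<bar>) = \<bar>clip01 (R i j) - S i j\<bar>"
      using sum_abs_diff_binary_convex_comb[of "{0..n}" lam "\<lambda>m. band m i j" "S i j"]
        decomp[OF that] lam_nonneg lam_sum band_binary by simp
    also have "\<dots> \<le> \<bar>R i j - S i j\<bar>"
      using \<open>S i j \<in> {0, 1}\<close> by (intro abs_clip01_diff_le) auto
    finally show ?thesis .
  qed
  have "(\<Sum>m=0..n. lam m * l1_dist n (band m) S)
      = (\<Sum>i<n. \<Sum>j<n. \<Sum>m=0..n. lam m * \<bar>band m i j - S i j\<bar>)"
    unfolding l1_dist_def sum_distrib_left by (simp add: sum.swap[of _ "{0..n}"])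
  also have "\<dots> \<le> l1_dist n R S"
    unfolding l1_dist_def by (intro sum_mono entry) auto
  finally show ?thesis
    using lam_nonneg lam_sum by (intro convex_comb_le_imp_exists_le) auto
qed

theorem lemma1:
  fixes n :: nat and S :: "nat \<Rightarrow> nat \<Rightarrow> real"
  assumes binS: "\<forall>i<n. \<forall>j<n. S i j \<in> {0, 1}"
    and symS: "\<forall>i<n. \<forall>j<n. S i j = S j i"
  shows "\<exists>R. strong_R_matrix n R \<and> (\<forall>i<n. \<forall>j<n. R i j \<in> {0, 1}) \<and>
             (\<forall>R'. strong_R_matrix n R' \<longrightarrow> l1_dist n R S \<le> l1_dist n R' S)"
proof -
  obtain m0 where m0_best: "\<And>m. m \<in> {0..n} \<Longrightarrow> l1_dist n (band m0) S \<le> l1_dist n (band m) S"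
    using ex_is_arg_min_if_finite[of "{0..n}" "\<lambda>m. l1_dist n (band m) S"]
    by (auto simp: is_arg_min_linorder)
  have "l1_dist n (band m0) S \<le> l1_dist n R' S" if "strong_R_matrix n R'" for R'
    using strong_R_matrix_exists_band_le_l1_dist[OF that binS] m0_best by force
  then show ?thesis
    using strong_R_matrix_band band_binary by blast
qed

end
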